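(* Let $m\ge 1$ and $n,k$ be positive integers. For $v=1,\dots,m$ let $X^{(v)}$ be a real $n\times p_v$ centered data matrix, let $X=[X^{(1)},\dots,X^{(m)}]$ with $p=p_1+\cdots+p_m$, and let $K^{(v)}=X^{(v)}{X^{(v)}}^T$. Let $X=UDV^T$ be a singular value decomposition of $X$ ($U$ $n\times n$ orthogonal, $V$ $p\times p$ orthogonal, $D$ $n\times p$ rectangular diagonal) with singular values in non-increasing order. Let $U_k$ be the first $k$ columns of $U$, $Q$ an arbitrary $k\times k$ orthogonal matrix, and $H=U_kQ$. Write $V^T=[{V^{(1)}}^T,\dots,{V^{(m)}}^T]$ with ${V^{(v)}}^T$ the $p\times p_v$ block of columns of $V^T$ for view $v$, and let ${V_{1:k}^{(v)}}^T$ be the top $k$ rows of ${V^{(v)}}^T$. Then for every $v$, $$\mathrm{tr}\big(K^{(v)}-H^TK^{(v)}H\big)=\mathrm{tr}\big(X^{(v)}{X^{(v)}}^T\big)-\Big(\mathrm{tr}\big({V_{1:k}^{(v)}}^T{X^{(v)}}^TX^{(v)}V_{1:k}^{(v)}\big)+\sum_{w\neq v}\mathrm{tr}\big({V_{1:k}^{(v)}}^T{X^{(v)}}^TX^{(w)}V_{1:k}^{(w)}\big)\Big).$$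
   Context: All matrices are real; $\mathrm{tr}$ denotes the trace. *)

theory Defs
  imports "Jordan_Normal_Form.Matrix"
begin

definition tr :: "real mat \<Rightarrow> real" where
  "tr A = (\<Sum>i<dim_row A. A $$ (i, i))"

definition orth :: "nat \<Rightarrow> real mat \<Rightarrow> bool" where
  "orth d A \<longleftrightarrow> A \<in> carrier_mat d d \<and> transpose_mat A * A = 1\<^sub>m d \<and> A * transpose_mat A = 1\<^sub>m d"

text \<open>Column offset of view v (0-indexed) inside the concatenation [X^(0),...,X^(m-1)].\<close>
definition offs :: "(nat \<Rightarrow> nat) \<Rightarrow> nat \<Rightarrow> nat" where
  "offs ps v = (\<Sum>u<v. ps u)"

end

theory Submission
  imports Defs
begin

(* Let S be the diagonal matrix of the k largest singular values.  From X = U D V^T we get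
   U^T X = D V^T, so the transposed projection U_k^T X^(v) of view v equals S times the top k rows
   of its block of V^T; as Q is orthogonal, tr (H^T K^(v) H) = tr (U_k^T K^(v) U_k) is the squared
   Frobenius norm of this matrix.  Dually X V = U D gives sum_w X^(w) V_1:k^(w) = U_k S, and
   substituting this into the sum over all views w on the right-hand side yields the same norm.
   Centering and the nonnegativity and ordering of the singular values play no role. *)

lemma tr_mult:
  assumes "A \<in> carrier_mat a b" "B \<in> carrier_mat b a"
  shows "tr (A * B) = (\<Sum>i<a. \<Sum>j<b. A $$ (i, j) * B $$ (j, i))"
  using assms unfolding tr_def by (auto simp: scalar_prod_def atLeast0LessThan intro!: sum.cong)

lemma tr_mult_comm:
  assumes "A \<in> carrier_mat a b" "B \<in> carrier_mat b a"
  shows "tr (A * B) = tr (B * A)"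
  using assms by (simp add: tr_mult sum.swap[of _ "{..<a}"] mult.commute)

lemma tr_orth_conj:
  assumes "orth k Q" "H \<in> carrier_mat n k" "K \<in> carrier_mat n n"
  shows "tr (transpose_mat (H * Q) * K * (H * Q)) = tr (transpose_mat H * K * H)"
proof -
  have Q: "Q \<in> carrier_mat k k" "Q * transpose_mat Q = 1\<^sub>m k"
    using assms(1) unfolding orth_def by auto
  define M where "M = transpose_mat H * K * H"
  have M: "M \<in> carrier_mat k k" using assms unfolding M_def by auto
  have "transpose_mat (H * Q) * K * (H * Q) = transpose_mat Q * (M * Q)"
    using assms Q unfolding M_def
    by (simp add: transpose_mult[of H n k Q k] assoc_mult_mat[of _ k n _ n _ k]
        assoc_mult_mat[of _ k k _ n _ k] assoc_mult_mat[of _ k n _ k _ k])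
  then have "tr (transpose_mat (H * Q) * K * (H * Q)) = tr (M * Q * transpose_mat Q)"
    using tr_mult_comm[of "transpose_mat Q" k k "M * Q"] M Q by auto
  also have "\<dots> = tr M" using M Q by simp
  finally show ?thesis unfolding M_def .
qed

lemma sum_offs_blocks:
  "(\<Sum>w<m. \<Sum>c<ps w. f (offs ps w + c)) = (\<Sum>c<(\<Sum>w<m. ps w). f c :: 'a :: comm_monoid_add)"
proof (induction m)
  case (Suc m)
  have "(\<Sum>c<(\<Sum>w<m. ps w) + ps m. f c)
      = (\<Sum>c<(\<Sum>w<m. ps w). f c) + (\<Sum>c<ps m. f ((\<Sum>w<m. ps w) + c))"
    by (simp add: sum.atLeastLessThan_concat[symmetric] lessThan_atLeast0
        sum.shift_bounds_nat_ivl[symmetric] add.commute)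
  with Suc show ?case by (simp add: offs_def)
qed simp

lemma offs_add_less:
  assumes "w < m" "c < ps w"
  shows "offs ps w + c < (\<Sum>w<m. ps w)"
proof -
  have "offs ps w + ps w = (\<Sum>u<Suc w. ps u)" by (simp add: offs_def)
  also have "\<dots> \<le> (\<Sum>u<m. ps u)" using assms by (intro sum_mono2) auto
  finally show ?thesis using assms by simp
qed

lemma diag_mult_entry:
  assumes "D \<in> carrier_mat n p" "M \<in> carrier_mat p q"
    and "\<And>i j. i < n \<Longrightarrow> j < p \<Longrightarrow> i \<noteq> j \<Longrightarrow> D $$ (i, j) = 0"
    and "i < n" "i < p" "c < q"
  shows "(D * M) $$ (i, c) = D $$ (i, i) * M $$ (i, c)"
proof -
  have "(D * M) $$ (i, c) = (\<Sum>l<p. D $$ (i, l) * M $$ (l, c))"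
    using assms by (auto simp: scalar_prod_def atLeast0LessThan intro!: sum.cong)
  also have "\<dots> = (\<Sum>l<p. if l = i then D $$ (i, i) * M $$ (i, c) else 0)"
    using assms by (intro sum.cong) auto
  finally show ?thesis using assms by simp
qed

lemma mult_diag_entry:
  assumes "M \<in> carrier_mat q n" "D \<in> carrier_mat n p"
    and "\<And>i j. i < n \<Longrightarrow> j < p \<Longrightarrow> i \<noteq> j \<Longrightarrow> D $$ (i, j) = 0"
    and "i < n" "i < p" "b < q"
  shows "(M * D) $$ (b, i) = M $$ (b, i) * D $$ (i, i)"
proof -
  have "(M * D) $$ (b, i) = (\<Sum>l<n. M $$ (b, l) * D $$ (l, i))"
    using assms by (auto simp: scalar_prod_def atLeast0LessThan intro!: sum.cong)
  also have "\<dots> = (\<Sum>l<n. if l = i then M $$ (b, i) * D $$ (i, i) else 0)"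
    using assms by (intro sum.cong) auto
  finally show ?thesis using assms by simp
qed

lemma orth_transpose_mult_cancel:
  assumes "orth n U" "B \<in> carrier_mat n q"
  shows "transpose_mat U * (U * B) = B"
  using assms unfolding orth_def by (simp flip: assoc_mult_mat[of _ n n _ n _ q])

lemma orth_mult_transpose_cancel:
  assumes "orth p V" "B \<in> carrier_mat n p"
  shows "B * transpose_mat V * V = B"
  using assms unfolding orth_def by (simp add: assoc_mult_mat[of _ n p _ p _ p])

locale multiview_svd =
  fixes m n k :: nat and ps :: "nat \<Rightarrow> nat" and Xs :: "nat \<Rightarrow> real mat"
    and X U D V :: "real mat"
  assumes Xs_dim: "\<And>v. v < m \<Longrightarrow> Xs v \<in> carrier_mat n (ps v)"
    and X_dim: "X \<in> carrier_mat n (\<Sum>v<m. ps v)"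
    and X_blocks: "\<And>v i j. v < m \<Longrightarrow> i < n \<Longrightarrow> j < ps v \<Longrightarrow>
                     X $$ (i, offs ps v + j) = Xs v $$ (i, j)"
    and U_orth: "orth n U"
    and V_orth: "orth (\<Sum>v<m. ps v) V"
    and D_dim: "D \<in> carrier_mat n (\<Sum>v<m. ps v)"
    and D_diag: "\<And>i j. i < n \<Longrightarrow> j < (\<Sum>v<m. ps v) \<Longrightarrow> i \<noteq> j \<Longrightarrow> D $$ (i, j) = 0"
    and svd: "X = U * D * transpose_mat V"
    and k_le_n: "k \<le> n" and k_le_p: "k \<le> (\<Sum>v<m. ps v)"
begin

abbreviation p :: nat where "p \<equiv> \<Sum>v<m. ps v"

definition Uk :: "real mat" where
  "Uk = mat n k (\<lambda>(i, j). U $$ (i, j))"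

definition VkT :: "nat \<Rightarrow> real mat" where
  "VkT w = mat k (ps w) (\<lambda>(i, j). transpose_mat V $$ (i, offs ps w + j))"

lemma U_carrier: "U \<in> carrier_mat n n" and V_carrier: "V \<in> carrier_mat p p"
  using U_orth V_orth unfolding orth_def by auto

lemma left_singular_entry:
  assumes "i < k" "c < p"
  shows "(\<Sum>b<n. U $$ (b, i) * X $$ (b, c)) = D $$ (i, i) * V $$ (c, i)"
proof -
  have "transpose_mat U * X = D * transpose_mat V"
    using orth_transpose_mult_cancel[OF U_orth, of "D * transpose_mat V" p] svd D_dim V_carrier U_carrier
    by (simp add: assoc_mult_mat[of U n n D p])
  then have "(transpose_mat U * X) $$ (i, c) = D $$ (i, i) * V $$ (c, i)"
    using diag_mult_entry[OF D_dim _ D_diag] assms k_le_n k_le_p V_carrier by simp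
  then show ?thesis
    using assms k_le_n U_carrier X_dim by (auto simp: scalar_prod_def atLeast0LessThan intro!: sum.cong)
qed

lemma right_singular_entry:
  assumes "i < k" "b < n"
  shows "(\<Sum>c<p. X $$ (b, c) * V $$ (c, i)) = U $$ (b, i) * D $$ (i, i)"
proof -
  have "X * V = U * D"
    using orth_mult_transpose_cancel[OF V_orth, of "U * D" n] svd D_dim U_carrier by simp
  then have "(X * V) $$ (b, i) = U $$ (b, i) * D $$ (i, i)"
    using mult_diag_entry[OF U_carrier D_dim D_diag] assms k_le_n k_le_p by simp
  then show ?thesis
    using assms k_le_p V_carrier X_dim by (auto simp: scalar_prod_def atLeast0LessThan intro!: sum.cong)
qed

lemma Uk_carrier: "Uk \<in> carrier_mat n k" and VkT_carrier: "VkT w \<in> carrier_mat k (ps w)"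
  unfolding Uk_def VkT_def by auto

lemma transpose_Uk_mult_view_entry:
  assumes "v < m" "i < k" "a < ps v"
  shows "(transpose_mat Uk * Xs v) $$ (i, a) = D $$ (i, i) * V $$ (offs ps v + a, i)"
proof -
  have "(transpose_mat Uk * Xs v) $$ (i, a) = (\<Sum>b<n. U $$ (b, i) * X $$ (b, offs ps v + a))"
    using assms Xs_dim[OF assms(1)] X_blocks[OF assms(1)] k_le_n
    by (auto simp: Uk_def scalar_prod_def atLeast0LessThan intro!: sum.cong)
  also have "\<dots> = D $$ (i, i) * V $$ (offs ps v + a, i)"
    using assms by (simp add: left_singular_entry offs_add_less)
  finally show ?thesis .
qed

lemma tr_view_projection:
  assumes "v < m"
  shows "tr (transpose_mat Uk * (Xs v * transpose_mat (Xs v)) * Uk)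
    = (\<Sum>i<k. \<Sum>a<ps v. (D $$ (i, i) * V $$ (offs ps v + a, i))\<^sup>2)"
proof -
  define B where "B = transpose_mat Uk * Xs v"
  have Xv: "Xs v \<in> carrier_mat n (ps v)" using Xs_dim assms .
  have B: "B \<in> carrier_mat k (ps v)" using Xv Uk_carrier unfolding B_def by auto
  have "transpose_mat Uk * (Xs v * transpose_mat (Xs v)) * Uk = B * transpose_mat B"
    using Xv Uk_carrier
    by (simp add: B_def transpose_mult[of _ k n _ "ps v"] assoc_mult_mat[of _ k n _ n _ k]
        assoc_mult_mat[of _ k n _ "ps v" _ k] assoc_mult_mat[of _ n "ps v" _ n _ k])
  moreover have "tr (B * transpose_mat B) = (\<Sum>i<k. \<Sum>a<ps v. B $$ (i, a) * B $$ (i, a))"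
    using B by (auto simp: tr_mult[of B k "ps v"] intro!: sum.cong)
  ultimately show ?thesis
    using transpose_Uk_mult_view_entry[OF assms] by (simp add: B_def power2_eq_square)
qed

lemma sum_view_products_entry:
  assumes "b < n" "i < k"
  shows "(\<Sum>w<m. (Xs w * transpose_mat (VkT w)) $$ (b, i)) = U $$ (b, i) * D $$ (i, i)"
proof -
  have "(Xs w * transpose_mat (VkT w)) $$ (b, i)
      = (\<Sum>c<ps w. X $$ (b, offs ps w + c) * V $$ (offs ps w + c, i))" if "w < m" for w
    using that assms Xs_dim[OF that] X_blocks[OF that] V_carrier k_le_p offs_add_less[of w m _ ps]
    by (auto simp: VkT_def scalar_prod_def atLeast0LessThan intro!: sum.cong)
  then have "(\<Sum>w<m. (Xs w * transpose_mat (VkT w)) $$ (b, i)) = (\<Sum>c<p. X $$ (b, c) * V $$ (c, i))"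
    by (simp add: sum_offs_blocks[where f = "\<lambda>c. X $$ (b, c) * V $$ (c, i)", symmetric])
  also have "\<dots> = U $$ (b, i) * D $$ (i, i)"
    by (rule right_singular_entry[OF assms(2,1)])
  finally show ?thesis .
qed

lemma tr_cross_views:
  assumes "v < m"
  shows "(\<Sum>w<m. tr (VkT v * transpose_mat (Xs v) * Xs w * transpose_mat (VkT w)))
    = (\<Sum>i<k. \<Sum>a<ps v. (D $$ (i, i) * V $$ (offs ps v + a, i))\<^sup>2)"
proof -
  define A where "A = VkT v * transpose_mat (Xs v)"
  have Xv: "Xs v \<in> carrier_mat n (ps v)" using Xs_dim assms .
  have A: "A \<in> carrier_mat k n" using Xv VkT_carrier[of v] unfolding A_def by auto
  have "tr (A * Xs w * transpose_mat (VkT w))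
      = (\<Sum>i<k. \<Sum>b<n. A $$ (i, b) * (Xs w * transpose_mat (VkT w)) $$ (b, i))" if "w < m" for w
    using A Xs_dim[OF that] VkT_carrier[of w]
    by (simp add: assoc_mult_mat[of A k n _ "ps w" _ k] tr_mult[of A k n])
  then have "(\<Sum>w<m. tr (A * Xs w * transpose_mat (VkT w)))
      = (\<Sum>i<k. \<Sum>b<n. A $$ (i, b) * (\<Sum>w<m. (Xs w * transpose_mat (VkT w)) $$ (b, i)))"
    by (simp add: sum_distrib_left sum.swap[of _ "{..<m}"])
  also have "\<dots> = (\<Sum>i<k. D $$ (i, i) * (A * Uk) $$ (i, i))"
    using A Uk_carrier
    by (auto simp: sum_view_products_entry scalar_prod_def atLeast0LessThan sum_distrib_left
        mult_ac Uk_def intro!: sum.cong)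
  also have "\<dots> = (\<Sum>i<k. \<Sum>a<ps v. (D $$ (i, i) * V $$ (offs ps v + a, i))\<^sup>2)"
  proof (intro sum.cong refl)
    fix i assume i: "i \<in> {..<k}"
    have "A * Uk = VkT v * transpose_mat (transpose_mat Uk * Xs v)"
      using Xv Uk_carrier VkT_carrier[of v]
      by (simp add: A_def transpose_mult[of _ k n _ "ps v"] assoc_mult_mat[of _ k "ps v" _ n _ k])
    then show "D $$ (i, i) * (A * Uk) $$ (i, i) = (\<Sum>a<ps v. (D $$ (i, i) * V $$ (offs ps v + a, i))\<^sup>2)"
      using i Xv Uk_carrier VkT_carrier[of v] V_carrier k_le_p offs_add_less[OF assms, of _ ps]
        transpose_Uk_mult_view_entry[OF assms]
      by (auto simp: VkT_def scalar_prod_def atLeast0LessThan power2_eq_square sum_distrib_left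
          mult_ac intro!: sum.cong)
  qed
  finally show ?thesis by (simp add: A_def)
qed

end

theorem proposition2:
  fixes m n k :: nat
    and ps :: "nat \<Rightarrow> nat"
    and Xs :: "nat \<Rightarrow> real mat"
    and X U D V Q :: "real mat"
  assumes m_pos: "m \<ge> 1" and n_pos: "n > 0" and k_pos: "k > 0"
    and Xs_dim: "\<And>v. v < m \<Longrightarrow> Xs v \<in> carrier_mat n (ps v)"
    and centered: "\<And>v j. v < m \<Longrightarrow> j < ps v \<Longrightarrow> (\<Sum>i<n. Xs v $$ (i, j)) = 0"
    and X_dim: "X \<in> carrier_mat n (\<Sum>v<m. ps v)"
    and X_blocks: "\<And>v i j. v < m \<Longrightarrow> i < n \<Longrightarrow> j < ps v \<Longrightarrow>
                     X $$ (i, offs ps v + j) = Xs v $$ (i, j)"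
    and U_orth: "orth n U"
    and V_orth: "orth (\<Sum>v<m. ps v) V"
    and D_dim: "D \<in> carrier_mat n (\<Sum>v<m. ps v)"
    and D_diag: "\<And>i j. i < n \<Longrightarrow> j < (\<Sum>v<m. ps v) \<Longrightarrow> i \<noteq> j \<Longrightarrow> D $$ (i, j) = 0"
    and D_nonneg: "\<And>i. i < min n (\<Sum>v<m. ps v) \<Longrightarrow> D $$ (i, i) \<ge> 0"
    and D_sorted: "\<And>i j. i \<le> j \<Longrightarrow> j < min n (\<Sum>v<m. ps v) \<Longrightarrow> D $$ (j, j) \<le> D $$ (i, i)"
    and svd: "X = U * D * transpose_mat V"
    and k_le_n: "k \<le> n" and k_le_p: "k \<le> (\<Sum>v<m. ps v)"
    and Q_orth: "orth k Q"
    and v_lt: "v < m"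
  shows
    "let Uk = mat n k (\<lambda>(i, j). U $$ (i, j));
         H = Uk * Q;
         K = (\<lambda>w. Xs w * transpose_mat (Xs w));
         VtT = (\<lambda>w. mat k (ps w) (\<lambda>(i, j). transpose_mat V $$ (i, offs ps w + j)));
         Vt = (\<lambda>w. transpose_mat (VtT w))
     in tr (K v) - tr (transpose_mat H * K v * H)
        = tr (Xs v * transpose_mat (Xs v))
          - (tr (VtT v * transpose_mat (Xs v) * Xs v * Vt v)
             + (\<Sum>w\<in>{..<m} - {v}. tr (VtT v * transpose_mat (Xs v) * Xs w * Vt w)))"
proof -
  interpret multiview_svd m n k ps Xs X U D V
    using assms by unfold_locales auto
  have "tr (transpose_mat (Uk * Q) * (Xs v * transpose_mat (Xs v)) * (Uk * Q))
      = tr (transpose_mat Uk * (Xs v * transpose_mat (Xs v)) * Uk)"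
    using Q_orth Uk_carrier Xs_dim[OF v_lt] by (intro tr_orth_conj) auto
  moreover have "(\<Sum>w<m. tr (VkT v * transpose_mat (Xs v) * Xs w * transpose_mat (VkT w)))
      = tr (VkT v * transpose_mat (Xs v) * Xs v * transpose_mat (VkT v))
        + (\<Sum>w\<in>{..<m} - {v}. tr (VkT v * transpose_mat (Xs v) * Xs w * transpose_mat (VkT w)))"
    using v_lt by (simp add: sum.remove)
  ultimately show ?thesis
    using tr_view_projection[OF v_lt] tr_cross_views[OF v_lt]
    unfolding Let_def Uk_def[symmetric] VkT_def[symmetric] by simp
qed

end
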